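(* There exists a point $x\in\{0,1,2\}^{\mathbb{N}}$ such that, for the full shift $(\{0,1,2\}^{\mathbb{N}},S)$, $V(x)\cap V^{\log}(x)=\emptyset$.
   Context: $S$ is the left shift. For $N\ge1$ let $\mathrm{Emp}(x,N)=\frac1N\sum_{n=1}^N\delta_{S^{n-1}(x)}$, and for $N\ge2$ let $\mathrm{Emp}^{\log}(x,N)=\frac1{\log N}\sum_{n=1}^N\frac1n\delta_{S^{n-1}(x)}$. $V(x)$ (resp. $V^{\log}(x)$) is the set of Borel probability measures $\nu$ such that $\mathrm{Emp}(x,N_k)\to\nu$ (resp. $\mathrm{Emp}^{\log}(x,N_k)\to\nu$) weak-$*$ for some increasing sequence $(N_k)$. *)

theory Defs
  imports "HOL-Probability.Probability"
begin

text \<open>The full shift on three symbols: sequences nat \<Rightarrow> nat with values in {0,1,2},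
  carrying the product topology (nat is discrete).\<close>

definition shift_space :: "(nat \<Rightarrow> nat) set" where
  "shift_space = {x. \<forall>n. x n \<in> {0,1,2}}"

definition lshift :: "(nat \<Rightarrow> nat) \<Rightarrow> (nat \<Rightarrow> nat)" where
  "lshift x = (\<lambda>n. x (Suc n))"

definition borel_prob_measures :: "(nat \<Rightarrow> nat) measure set" where
  "borel_prob_measures =
     {\<nu>. prob_space \<nu> \<and> sets \<nu> = sets (restrict_space borel shift_space)}"

definition emp_int :: "(nat \<Rightarrow> nat) \<Rightarrow> nat \<Rightarrow> ((nat \<Rightarrow> nat) \<Rightarrow> real) \<Rightarrow> real" where
  "emp_int x N f = (1 / real N) * (\<Sum>n=1..N. f ((lshift ^^ (n - 1)) x))"

definition emp_log_int :: "(nat \<Rightarrow> nat) \<Rightarrow> nat \<Rightarrow> ((nat \<Rightarrow> nat) \<Rightarrow> real) \<Rightarrow> real" where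
  "emp_log_int x N f = (1 / ln (real N)) * (\<Sum>n=1..N. (1 / real n) * f ((lshift ^^ (n - 1)) x))"

definition V :: "(nat \<Rightarrow> nat) \<Rightarrow> (nat \<Rightarrow> nat) measure set" where
  "V x = {\<nu> \<in> borel_prob_measures. \<exists>Nk :: nat \<Rightarrow> nat. strict_mono Nk \<and> (\<forall>k. Nk k \<ge> 1) \<and>
      (\<forall>f. continuous_on shift_space f \<longrightarrow>
         (\<lambda>k. emp_int x (Nk k) f) \<longlonglongrightarrow> (\<integral>y. f y \<partial>\<nu>))}"

definition V_log :: "(nat \<Rightarrow> nat) \<Rightarrow> (nat \<Rightarrow> nat) measure set" where
  "V_log x = {\<nu> \<in> borel_prob_measures. \<exists>Nk :: nat \<Rightarrow> nat. strict_mono Nk \<and> (\<forall>k. Nk k \<ge> 2) \<and>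
      (\<forall>f. continuous_on shift_space f \<longrightarrow>
         (\<lambda>k. emp_log_int x (Nk k) f) \<longlonglongrightarrow> (\<integral>y. f y \<partial>\<nu>))}"

end

theory Submission
  imports Defs
begin

(* The point writes the symbol k mod 3 on the positions n with 4^k <= n < 4^(k+1).
   In the logarithmic average the k-th block carries weight close to ln 4; these weights
   decrease in k and are dealt out to the three symbols in turn, so the three log-weighted
   counts stay within a bounded distance of each other and each cylinder [j] gets
   log-frequency 1/3. In the Cesaro average, however, at every time N either the current
   block or the previous complete one occupies at least 3/8 of {1..N}, so along every
   sequence N_k some cylinder [j] has frequency at least 3/8. A measure in V(x) and
   V_log(x) would have to give [j] mass 1/3 and at least 3/8 at once. *)

definition block_index :: "nat \<Rightarrow> nat" where
  "block_index n = nat \<lfloor>log 4 (real n)\<rfloor>"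

lemma block_index_eqI:
  assumes "4 ^ k \<le> n" "n < 4 ^ Suc k"
  shows "block_index n = k"
  using floor_log_nat_eq_if[of 4 k n] assms by (simp add: block_index_def)

lemma block_index_bounds:
  assumes "n \<ge> 1"
  shows "4 ^ block_index n \<le> n" "n < 4 ^ Suc (block_index n)"
proof -
  obtain k where "4 ^ k \<le> n" "n < 4 ^ Suc k"
    using ex_power_ivl1[of 4 n] assms by auto
  then show "4 ^ block_index n \<le> n" "n < 4 ^ Suc (block_index n)"
    using block_index_eqI by simp_all
qed

lemma sum_atLeastLessThan_group:
  fixes g :: "nat \<Rightarrow> 'a :: comm_monoid_add"
  assumes "a \<le> b"
  shows "(\<Sum>m\<in>{a..<b}. sum g {c * m..<c * m + c}) = sum g {c * a..<c * b}"
  using assms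
proof (induction b rule: dec_induct)
  case (step b)
  have "sum g {c * a..<c * Suc b} = sum g {c * a..<c * b} + sum g {c * b..<c * b + c}"
    using step.hyps by (simp add: sum.atLeastLessThan_concat add.commute)
  then show ?case using step by simp
qed simp

lemma harmonic_sum_scale_le:
  assumes "c > 0" "a > 0" "a \<le> b"
  shows "(\<Sum>n\<in>{c * a..<c * b}. 1 / real n) \<le> (\<Sum>m\<in>{a..<b}. 1 / real m)"
proof -
  have "(\<Sum>n\<in>{c * m..<c * m + c}. 1 / real n) \<le> 1 / real m" if "m \<in> {a..<b}" for m
  proof (rule sum_bounded_above_divide)
    have "c * m > 0" using that assms by simp
    fix n assume "n \<in> {c * m..<c * m + c}"
    then have "real (c * m) \<le> real n" by (simp del: of_nat_mult)
    moreover have "real (c * m) > 0" using \<open>c * m > 0\<close> by (simp del: of_nat_mult)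
    ultimately have "1 / real n \<le> 1 / real (c * m)" by (intro frac_le) auto
    then show "1 / real n \<le> 1 / real m / real (card {c * m..<c * m + c})"
      by (simp add: mult.commute)
  qed (use assms in auto)
  then have "(\<Sum>m\<in>{a..<b}. \<Sum>n\<in>{c * m..<c * m + c}. 1 / real n) \<le> (\<Sum>m\<in>{a..<b}. 1 / real m)"
    by (rule sum_mono)
  then show ?thesis unfolding sum_atLeastLessThan_group[OF \<open>a \<le> b\<close>] .
qed

definition block_weight :: "nat \<Rightarrow> real" where
  "block_weight k = (\<Sum>n\<in>{4 ^ k..<4 ^ Suc k}. 1 / real n)"

lemma block_weight_nonneg: "block_weight k \<ge> 0"
  unfolding block_weight_def by (intro sum_nonneg) auto

lemma antimono_block_weight: "antimono block_weight"
proof (rule decseq_SucI)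
  fix k
  show "block_weight (Suc k) \<le> block_weight k"
    using harmonic_sum_scale_le[of 4 "4 ^ k" "4 ^ Suc k"] by (simp add: block_weight_def)
qed

definition mod3_partial_sum :: "(nat \<Rightarrow> real) \<Rightarrow> nat \<Rightarrow> nat \<Rightarrow> real" where
  "mod3_partial_sum a j K = (\<Sum>k<K. if k mod 3 = j then a k else 0)"

lemma mod3_partial_sum_Suc:
  "mod3_partial_sum a j (Suc K) = mod3_partial_sum a j K + (if K mod 3 = j then a K else 0)"
  by (simp add: mod3_partial_sum_def)

(* Always S 2 <= S 1 <= S 0 <= S 2 + a 0; the phase K mod 3 tells which of these gaps
   can already absorb the next term a K. *)
lemma mod3_partial_sum_invariant:
  fixes a :: "nat \<Rightarrow> real"
  assumes "antimono a"
  defines "S \<equiv> mod3_partial_sum a"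
  shows "(K mod 3 = 0 \<longrightarrow> S 2 K \<le> S 1 K \<and> S 1 K \<le> S 0 K \<and> S 0 K + a K \<le> S 2 K + a 0) \<and>
    (K mod 3 = 1 \<longrightarrow> S 2 K \<le> S 1 K \<and> S 1 K + a K \<le> S 0 K \<and> S 0 K \<le> S 2 K + a 0) \<and>
    (K mod 3 = 2 \<longrightarrow> S 2 K + a K \<le> S 1 K \<and> S 1 K \<le> S 0 K \<and> S 0 K \<le> S 2 K + a 0)"
proof (induction K)
  case 0
  then show ?case by (simp add: S_def mod3_partial_sum_def)
next
  case (Suc K)
  have "a (Suc K) \<le> a K" using assms(1) by (simp add: antimonoD)
  consider "K mod 3 = 0" | "K mod 3 = 1" | "K mod 3 = 2" by arith
  then show ?case
    using Suc.IH \<open>a (Suc K) \<le> a K\<close> by cases (simp_all add: S_def mod3_partial_sum_Suc mod_Suc)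
qed

lemma mod3_partial_sum_close:
  fixes a :: "nat \<Rightarrow> real"
  assumes "antimono a" "\<And>k. a k \<ge> 0" "j < 3" "j' < 3"
  shows "mod3_partial_sum a j K \<le> mod3_partial_sum a j' K + a 0"
proof -
  have "j \<in> {0, 1, 2}" "j' \<in> {0, 1, 2}" using assms(3,4) by auto
  then show ?thesis
    using mod3_partial_sum_invariant[OF assms(1), of K] assms(2)[of K] assms(2)[of 0] by auto
qed

definition log_weight :: "nat \<Rightarrow> nat \<Rightarrow> real" where
  "log_weight j N = (\<Sum>n\<in>{1..N}. of_bool (block_index n mod 3 = j) / real n)"

lemma block_sum_log_weight:
  "(\<Sum>n\<in>{4 ^ K..<4 ^ Suc K}. of_bool (block_index n mod 3 = j) / real n) =
     (if K mod 3 = j then block_weight K else 0)"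
proof -
  have "(\<Sum>n\<in>{4 ^ K..<4 ^ Suc K}. of_bool (block_index n mod 3 = j) / real n) =
        (\<Sum>n\<in>{4 ^ K..<4 ^ Suc K}. of_bool (K mod 3 = j) / real n)"
    by (intro sum.cong refl) (metis atLeastLessThan_iff block_index_eqI)
  then show ?thesis by (simp add: block_weight_def)
qed

lemma sum_below_block_log_weight:
  "(\<Sum>n\<in>{1..<4 ^ K}. of_bool (block_index n mod 3 = j) / real n) = mod3_partial_sum block_weight j K"
proof (induction K)
  case (Suc K)
  have "(\<Sum>n\<in>{1..<4 ^ Suc K}. of_bool (block_index n mod 3 = j) / real n) =
        (\<Sum>n\<in>{1..<4 ^ K}. of_bool (block_index n mod 3 = j) / real n) +
        (\<Sum>n\<in>{4 ^ K..<4 ^ Suc K}. of_bool (block_index n mod 3 = j) / real n)"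
    using one_le_power[of "4::nat" K] by (intro sum.atLeastLessThan_concat[symmetric]) simp_all
  then show ?case
    by (simp only: Suc.IH block_sum_log_weight mod3_partial_sum_Suc)
qed (simp add: mod3_partial_sum_def)

lemma log_weight_bounds:
  assumes "N \<ge> 1"
  shows "mod3_partial_sum block_weight j (block_index N) \<le> log_weight j N"
    and "log_weight j N \<le> mod3_partial_sum block_weight j (block_index N) + block_weight 0"
proof -
  define K where "K = block_index N"
  have K: "4 ^ K \<le> N" "N < 4 ^ Suc K"
    using block_index_bounds[OF assms] by (simp_all add: K_def)
  define r where "r = (\<Sum>n\<in>{4 ^ K..N}. of_bool (block_index n mod 3 = j) / real n)"
  have "log_weight j N = (\<Sum>n\<in>{1..<4 ^ K}. of_bool (block_index n mod 3 = j) / real n) + r"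
    unfolding log_weight_def r_def atLeastLessThanSuc_atLeastAtMost[symmetric]
    using K one_le_power[of "4::nat" K] by (intro sum.atLeastLessThan_concat[symmetric]) simp_all
  then have split: "log_weight j N = mod3_partial_sum block_weight j K + r"
    by (simp only: sum_below_block_log_weight)
  have "0 \<le> r" by (simp add: r_def sum_nonneg)
  have "r \<le> (\<Sum>n\<in>{4 ^ K..<4 ^ Suc K}. of_bool (block_index n mod 3 = j) / real n)"
    unfolding r_def using K by (intro sum_mono2) auto
  also have "\<dots> \<le> block_weight 0"
    unfolding block_sum_log_weight
    using block_weight_nonneg[of K] antimonoD[OF antimono_block_weight, of 0 K] by simp
  finally show "mod3_partial_sum block_weight j (block_index N) \<le> log_weight j N"
    and "log_weight j N \<le> mod3_partial_sum block_weight j (block_index N) + block_weight 0"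
    using split \<open>0 \<le> r\<close> by (simp_all add: K_def)
qed

lemma log_weight_close:
  assumes "N \<ge> 1" "j < 3" "j' < 3"
  shows "log_weight j N \<le> log_weight j' N + 2 * block_weight 0"
  using log_weight_bounds[OF assms(1), of j] log_weight_bounds[OF assms(1), of j']
    mod3_partial_sum_close[OF antimono_block_weight block_weight_nonneg assms(2,3), of "block_index N"]
  by linarith

lemma sum_log_weight: "log_weight 0 N + log_weight 1 N + log_weight 2 N = harm N"
proof -
  have "of_bool (block_index n mod 3 = 0) + of_bool (block_index n mod 3 = 1)
          + of_bool (block_index n mod 3 = 2) = (1::real)" for n
    by auto
  then have "log_weight 0 N + log_weight 1 N + log_weight 2 N = (\<Sum>n\<in>{1..N}. 1 / real n)"
    unfolding log_weight_def sum.distrib[symmetric] add_divide_distrib[symmetric] by simp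
  then show ?thesis by (simp add: harm_def divide_inverse)
qed

lemma log_weight_near_third_harm:
  assumes "N \<ge> 1" "j < 3"
  shows "\<bar>log_weight j N - harm N / 3\<bar> \<le> 2 * block_weight 0"
  using log_weight_close[OF assms(1) assms(2), of 0] log_weight_close[OF assms(1) assms(2), of 1]
    log_weight_close[OF assms(1) assms(2), of 2] log_weight_close[OF assms(1) _ assms(2), of 0]
    log_weight_close[OF assms(1) _ assms(2), of 1] log_weight_close[OF assms(1) _ assms(2), of 2]
    sum_log_weight[of N]
  unfolding abs_le_iff by simp

lemma tendsto_div_ln_of_bounded_diff_harm:
  fixes u :: "nat \<Rightarrow> real"
  assumes "\<forall>\<^sub>F N in sequentially. \<bar>u N - c * harm N\<bar> \<le> B"
  shows "(\<lambda>N. u N / ln (real N)) \<longlonglongrightarrow> c"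
proof -
  have ln_large: "\<forall>\<^sub>F N in sequentially. ln (real N) > 0"
    using eventually_ge_at_top[of 2] by eventually_elim simp
  have ln_infinity: "filterlim (\<lambda>N. ln (real N)) at_infinity sequentially"
    by (intro filterlim_at_top_imp_at_infinity filterlim_compose[OF ln_at_top filterlim_real_sequentially])
  have harm_rel: "(\<lambda>N. (harm N - ln (real N)) / ln (real N)) \<longlonglongrightarrow> 0"
    by (rule tendsto_divide_0[OF euler_mascheroni_LIMSEQ ln_infinity])
  have err: "(\<lambda>N. (u N - c * harm N) / ln (real N)) \<longlonglongrightarrow> 0"
  proof (rule Lim_null_comparison)
    show "\<forall>\<^sub>F N in sequentially. norm ((u N - c * harm N) / ln (real N)) \<le> B / ln (real N)"
      using assms ln_large by eventually_elim (simp add: abs_divide divide_right_mono)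
    show "(\<lambda>N. B / ln (real N)) \<longlonglongrightarrow> 0"
      by (rule tendsto_divide_0[OF tendsto_const ln_infinity])
  qed
  have "(\<lambda>N. c + c * ((harm N - ln (real N)) / ln (real N)) + (u N - c * harm N) / ln (real N))
          \<longlonglongrightarrow> c"
    using tendsto_add[OF tendsto_add[OF tendsto_const tendsto_mult[OF tendsto_const harm_rel]] err]
    by simp
  moreover have "\<forall>\<^sub>F N in sequentially.
      c + c * ((harm N - ln (real N)) / ln (real N)) + (u N - c * harm N) / ln (real N) = u N / ln (real N)"
    using ln_large by eventually_elim (simp add: field_simps)
  ultimately show ?thesis by (rule Lim_transform_eventually)
qed

lemma log_weight_div_ln_tendsto:
  assumes "j < 3"
  shows "(\<lambda>N. log_weight j N / ln (real N)) \<longlonglongrightarrow> 1 / 3"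
proof (rule tendsto_div_ln_of_bounded_diff_harm)
  show "\<forall>\<^sub>F N in sequentially. \<bar>log_weight j N - 1 / 3 * harm N\<bar> \<le> 2 * block_weight 0"
    using eventually_ge_at_top[of 1]
    by eventually_elim (use log_weight_near_third_harm[OF _ assms] in simp)
qed

lemma dominant_block:
  assumes "N \<ge> 1"
  obtains k where "3 * N \<le> 8 * card {n \<in> {1..N}. block_index n = k}"
proof -
  define K where "K = block_index N"
  have K: "4 ^ K \<le> N" "N < 4 ^ Suc K"
    using block_index_bounds[OF assms] by (simp_all add: K_def)
  have block_subset: "{(4::nat) ^ k..<m} \<subseteq> {n \<in> {1..N}. block_index n = k}"
    if "m \<le> Suc N" "m \<le> 4 ^ Suc k" for k m
    using that one_le_power[of "4::nat" k] by (auto intro: block_index_eqI)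
  (* If the current block K is short, the complete block k = K - 1 wins: it has 3 * 4^k
     elements while N + 1 < 8 * 4^k. *)
  show ?thesis
  proof (cases "2 * 4 ^ K \<le> N + 1")
    case True
    have "card {4 ^ K..<Suc N} \<le> card {n \<in> {1..N}. block_index n = K}"
      using block_subset[of "Suc N" K] K by (intro card_mono) auto
    then show ?thesis using True by (intro that[of K]) simp
  next
    case False
    then obtain k where k: "K = Suc k"
      using assms by (cases K) auto
    have "card {(4::nat) ^ k..<4 ^ K} \<le> card {n \<in> {1..N}. block_index n = k}"
      using block_subset[of "4 ^ K" k] K k by (intro card_mono) auto
    then show ?thesis using False k by (intro that[of k]) simp
  qed
qed

(* Index i of the sequence is position i + 1 in the definition of Emp. *)
definition block_sequence :: "nat \<Rightarrow> nat" where
  "block_sequence i = block_index (Suc i) mod 3"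

definition cylinder_indicator :: "nat \<Rightarrow> (nat \<Rightarrow> nat) \<Rightarrow> real" where
  "cylinder_indicator j y = of_bool (y 0 = j)"

lemma block_sequence_in_shift_space: "block_sequence \<in> shift_space"
  by (auto simp: shift_space_def block_sequence_def)

lemma continuous_on_cylinder_indicator: "continuous_on shift_space (cylinder_indicator j)"
proof -
  have "continuous_on UNIV (\<lambda>y :: nat \<Rightarrow> nat. (\<lambda>m. of_bool (m = j) :: real) (y 0))"
    by (intro continuous_on_compose2[OF Topological_Spaces.continuous_on_discrete continuous_on_product_coordinates]) auto
  then show ?thesis
    unfolding cylinder_indicator_def by (rule continuous_on_subset) simp
qed

lemma funpow_lshift: "(lshift ^^ m) x = (\<lambda>i. x (i + m))"
  by (induction m) (auto simp: lshift_def)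

lemma cylinder_indicator_block_sequence_orbit:
  "cylinder_indicator j ((lshift ^^ m) block_sequence) = of_bool (block_index (Suc m) mod 3 = j)"
  by (simp add: funpow_lshift cylinder_indicator_def block_sequence_def)

lemma emp_log_int_cylinder_indicator:
  "emp_log_int block_sequence N (cylinder_indicator j) = log_weight j N / ln (real N)"
proof -
  have "(\<Sum>n=1..N. 1 / real n * cylinder_indicator j ((lshift ^^ (n - 1)) block_sequence)) = log_weight j N"
    unfolding log_weight_def by (intro sum.cong refl) (auto simp: cylinder_indicator_block_sequence_orbit)
  then show ?thesis by (simp add: emp_log_int_def)
qed

lemma emp_int_cylinder_indicator:
  "emp_int block_sequence N (cylinder_indicator j) = card {n \<in> {1..N}. block_index n mod 3 = j} / real N"
proof -
  have "(\<Sum>n=1..N. cylinder_indicator j ((lshift ^^ (n - 1)) block_sequence)) =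
        (\<Sum>n=1..N. of_bool (block_index n mod 3 = j))"
    by (intro sum.cong refl) (auto simp: cylinder_indicator_block_sequence_orbit)
  then show ?thesis by (simp add: emp_int_def Int_def)
qed

lemma emp_int_cylinder_indicator_ge:
  assumes "N \<ge> 1"
  obtains j where "j < 3" "emp_int block_sequence N (cylinder_indicator j) \<ge> 3 / 8"
proof -
  obtain k where k: "3 * N \<le> 8 * card {n \<in> {1..N}. block_index n = k}"
    using dominant_block[OF assms] .
  have "card {n \<in> {1..N}. block_index n = k} \<le> card {n \<in> {1..N}. block_index n mod 3 = k mod 3}"
    by (intro card_mono) auto
  with k have "3 * real N \<le> 8 * card {n \<in> {1..N}. block_index n mod 3 = k mod 3}"
    by linarith
  then show ?thesis
    using assms by (intro that[of "k mod 3"]) (simp_all add: emp_int_cylinder_indicator field_simps)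
qed

lemma V_log_block_sequence_cylinder:
  assumes "\<nu> \<in> V_log block_sequence" "j < 3"
  shows "(\<integral>y. cylinder_indicator j y \<partial>\<nu>) = 1 / 3"
proof -
  obtain Mk where Mk: "strict_mono Mk"
    and emp_log: "(\<lambda>k. emp_log_int block_sequence (Mk k) (cylinder_indicator j))
                    \<longlonglongrightarrow> (\<integral>y. cylinder_indicator j y \<partial>\<nu>)"
    using assms(1) continuous_on_cylinder_indicator unfolding V_log_def by blast
  have "(\<lambda>k. emp_log_int block_sequence (Mk k) (cylinder_indicator j)) \<longlonglongrightarrow> 1 / 3"
    using LIMSEQ_subseq_LIMSEQ[OF log_weight_div_ln_tendsto[OF assms(2)] Mk]
    by (simp add: emp_log_int_cylinder_indicator o_def)
  with emp_log show ?thesis by (rule LIMSEQ_unique)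
qed

lemma V_block_sequence_cylinder:
  assumes "\<nu> \<in> V block_sequence"
  obtains j where "j < 3" "(\<integral>y. cylinder_indicator j y \<partial>\<nu>) \<ge> 3 / 8"
proof (rule ccontr)
  assume small: "\<not> thesis"
  obtain Nk where Nk: "\<And>k. Nk k \<ge> 1"
    and emp: "\<And>j. (\<lambda>k. emp_int block_sequence (Nk k) (cylinder_indicator j))
                      \<longlonglongrightarrow> (\<integral>y. cylinder_indicator j y \<partial>\<nu>)"
    using assms continuous_on_cylinder_indicator unfolding V_def by blast
  have "\<forall>\<^sub>F k in sequentially. \<forall>j \<in> {..<3}. emp_int block_sequence (Nk k) (cylinder_indicator j) < 3 / 8"
  proof (intro eventually_ball_finite ballI)
    fix j :: nat assume "j \<in> {..<3}"
    then show "\<forall>\<^sub>F k in sequentially. emp_int block_sequence (Nk k) (cylinder_indicator j) < 3 / 8"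
      using small that by (intro order_tendstoD(2)[OF emp]) force
  qed simp
  then obtain k where "\<forall>j < 3. emp_int block_sequence (Nk k) (cylinder_indicator j) < 3 / 8"
    by (auto simp: eventually_sequentially)
  moreover obtain j where "j < 3" "emp_int block_sequence (Nk k) (cylinder_indicator j) \<ge> 3 / 8"
    using emp_int_cylinder_indicator_ge[OF Nk] .
  ultimately show False by fastforce
qed

theorem proposition4p5:
  shows "\<exists>x \<in> shift_space. V x \<inter> V_log x = {}"
proof (intro bexI[OF _ block_sequence_in_shift_space] equals0I)
  fix \<nu> assume "\<nu> \<in> V block_sequence \<inter> V_log block_sequence"
  then obtain j where "j < 3" "(\<integral>y. cylinder_indicator j y \<partial>\<nu>) \<ge> 3 / 8"
    "(\<integral>y. cylinder_indicator j y \<partial>\<nu>) = 1 / 3"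
    using V_block_sequence_cylinder V_log_block_sequence_cylinder by (metis IntE)
  then show False by simp
qed

end
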